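(* Let $\Gamma=(V,E)$ be a graph, for each $v\in V$ let $C_v$ be a left LCM monoid, and let $C=\Gamma_{v\in V}C_v$. If $x,y\in C_v$ for some $v\in V$, then $C_vx\cap C_vy=\emptyset$ if and only if $Cx\cap Cy=\emptyset$. Moreover, if $C_vx\cap C_vy=C_vz$ with $z\in C_v$, then $Cx\cap Cy=Cz$.
   Context: A graph $\Gamma=(V,E)$ has vertex set $V$ and irreflexive symmetric edge relation $E$. The graph product $\Gamma_{v\in V}C_v$ of pairwise disjoint monoids $C_v$ is the quotient of their free product by the congruence generated by all $(mn,nm)$ with $m\in C_u$, $n\in C_v$, $(u,v)\in E$; each $C_v$ is identified with its image in $C$. A left LCM monoid is a right cancellative monoid in which the intersection of any two principal left ideals is empty or principal. *)

theory Defs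
  imports "HOL-Algebra.Group"
begin

definition is_graph :: "'v set \<Rightarrow> ('v \<Rightarrow> 'v \<Rightarrow> bool) \<Rightarrow> bool" where
  "is_graph V E \<longleftrightarrow> (\<forall>u v. E u v \<longrightarrow> u \<in> V \<and> v \<in> V) \<and>
     (\<forall>u v. E u v \<longrightarrow> E v u) \<and> (\<forall>v. \<not> E v v)"

definition lideal :: "('a, 'b) monoid_scheme \<Rightarrow> 'a \<Rightarrow> 'a set" where
  "lideal M x = {c \<otimes>\<^bsub>M\<^esub> x | c. c \<in> carrier M}"

definition right_cancellative :: "('a, 'b) monoid_scheme \<Rightarrow> bool" where
  "right_cancellative M \<longleftrightarrow>
     (\<forall>a\<in>carrier M. \<forall>b\<in>carrier M. \<forall>c\<in>carrier M. a \<otimes>\<^bsub>M\<^esub> c = b \<otimes>\<^bsub>M\<^esub> c \<longrightarrow> a = b)"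

definition left_LCM_monoid :: "('a, 'b) monoid_scheme \<Rightarrow> bool" where
  "left_LCM_monoid M \<longleftrightarrow> monoid M \<and> right_cancellative M \<and>
     (\<forall>x\<in>carrier M. \<forall>y\<in>carrier M.
        lideal M x \<inter> lideal M y = {} \<or> (\<exists>z\<in>carrier M. lideal M x \<inter> lideal M y = lideal M z))"

definition gp_words :: "'v set \<Rightarrow> ('v \<Rightarrow> 'a monoid) \<Rightarrow> ('v \<times> 'a) list set" where
  "gp_words V M = {w. \<forall>(v, m) \<in> set w. v \<in> V \<and> m \<in> carrier (M v)}"

inductive gp_rel :: "'v set \<Rightarrow> ('v \<Rightarrow> 'v \<Rightarrow> bool) \<Rightarrow> ('v \<Rightarrow> 'a monoid) \<Rightarrow>
    ('v \<times> 'a) list \<Rightarrow> ('v \<times> 'a) list \<Rightarrow> bool"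
  for V E M where
  gp_refl: "w \<in> gp_words V M \<Longrightarrow> gp_rel V E M w w"
| gp_sym: "gp_rel V E M w w' \<Longrightarrow> gp_rel V E M w' w"
| gp_trans: "gp_rel V E M w w' \<Longrightarrow> gp_rel V E M w' w'' \<Longrightarrow> gp_rel V E M w w''"
| gp_unit: "\<lbrakk>p \<in> gp_words V M; q \<in> gp_words V M; v \<in> V\<rbrakk> \<Longrightarrow>
     gp_rel V E M (p @ [(v, \<one>\<^bsub>M v\<^esub>)] @ q) (p @ q)"
| gp_mult: "\<lbrakk>p \<in> gp_words V M; q \<in> gp_words V M; v \<in> V; a \<in> carrier (M v); b \<in> carrier (M v)\<rbrakk> \<Longrightarrow>
     gp_rel V E M (p @ [(v, a), (v, b)] @ q) (p @ [(v, a \<otimes>\<^bsub>M v\<^esub> b)] @ q)"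
| gp_comm: "\<lbrakk>p \<in> gp_words V M; q \<in> gp_words V M; E u v; a \<in> carrier (M u); b \<in> carrier (M v)\<rbrakk> \<Longrightarrow>
     gp_rel V E M (p @ [(u, a), (v, b)] @ q) (p @ [(v, b), (u, a)] @ q)"

definition gp_class :: "'v set \<Rightarrow> ('v \<Rightarrow> 'v \<Rightarrow> bool) \<Rightarrow> ('v \<Rightarrow> 'a monoid) \<Rightarrow>
    ('v \<times> 'a) list \<Rightarrow> ('v \<times> 'a) list set" where
  "gp_class V E M w = {w'. gp_rel V E M w w'}"

text \<open>The graph product monoid: congruence classes of words, with concatenation.\<close>
definition graph_product :: "'v set \<Rightarrow> ('v \<Rightarrow> 'v \<Rightarrow> bool) \<Rightarrow> ('v \<Rightarrow> 'a monoid) \<Rightarrow>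
    ('v \<times> 'a) list set monoid" where
  "graph_product V E M =
     \<lparr> carrier = gp_class V E M ` gp_words V M,
       mult = (\<lambda>X Y. \<Union>a\<in>X. \<Union>b\<in>Y. gp_class V E M (a @ b)),
       one = gp_class V E M [] \<rparr>"

text \<open>The canonical map C_v \<rightarrow> C (by which C_v is identified with its image).\<close>
definition gp_incl :: "'v set \<Rightarrow> ('v \<Rightarrow> 'v \<Rightarrow> bool) \<Rightarrow> ('v \<Rightarrow> 'a monoid) \<Rightarrow>
    'v \<Rightarrow> 'a \<Rightarrow> ('v \<times> 'a) list set" where
  "gp_incl V E M v m = gp_class V E M [(v, m)]"

end

theory Submission
  imports Defs
begin

text \<open>
  Fix a vertex v. Every element w of the graph product has a v-tail t(w) in C_v: the last letter
  from C_v of a reduced word for w, if that letter commutes to the right end, and 1 otherwise.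
  To see that it is well defined, encode a word by its projections onto all sets of pairwise
  non-adjacent vertices of size at most two, kept reduced by multiplying neighbouring letters of
  the same factor and dropping identities; these projections are computed by an action of the letters that respects the
  defining relations of C. Then t(p x) lies in C_v x for x in C_v, and every w equals Z t(w) in C.
  Hence any common element of Cx and Cy has the form Z t with t in C_v x \<inter> C_v y, which gives
  both claims; only the monoid axioms of the factors are used.
\<close>

section \<open>The graph product as a quotient of words\<close>

declare gp_rel.gp_trans [trans]

lemma gp_words_Nil [simp]: "[] \<in> gp_words V M"
  by (simp add: gp_words_def)

lemma gp_words_Cons [simp]:
  "l # w \<in> gp_words V M \<longleftrightarrow> fst l \<in> V \<and> snd l \<in> carrier (M (fst l)) \<and> w \<in> gp_words V M"
  by (cases l) (auto simp: gp_words_def)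

lemma gp_words_append [simp]: "p @ q \<in> gp_words V M \<longleftrightarrow> p \<in> gp_words V M \<and> q \<in> gp_words V M"
  by (auto simp: gp_words_def)

locale graph_of_monoids =
  fixes V :: "'v set" and E :: "'v \<Rightarrow> 'v \<Rightarrow> bool" and M :: "'v \<Rightarrow> 'a monoid"
  assumes graph: "is_graph V E"
    and monoid: "\<And>v. v \<in> V \<Longrightarrow> monoid (M v)"
begin

abbreviation "R \<equiv> gp_rel V E M"
abbreviation "W \<equiv> gp_words V M"
abbreviation "cl \<equiv> gp_class V E M"
abbreviation "C \<equiv> graph_product V E M"

lemma edge_in_V: "E u v \<Longrightarrow> u \<in> V \<and> v \<in> V"
  using graph by (auto simp: is_graph_def)

lemma edge_sym: "E u v \<Longrightarrow> E v u"
  using graph by (auto simp: is_graph_def)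

lemma edge_irrefl: "\<not> E v v"
  using graph by (auto simp: is_graph_def)

lemma gp_rel_words: "R w w' \<Longrightarrow> w \<in> W \<and> w' \<in> W"
proof (induction rule: gp_rel.induct)
  case (gp_unit p q v)
  then show ?case using monoid.one_closed[OF monoid] by simp
next
  case (gp_mult p q v a b)
  then show ?case using monoid.m_closed[OF monoid] by simp
next
  case (gp_comm p q u v a b)
  then show ?case using edge_in_V by simp
qed auto

lemma gp_rel_append_right: "R w w' \<Longrightarrow> q \<in> W \<Longrightarrow> R (w @ q) (w' @ q)"
proof (induction rule: gp_rel.induct)
  case (gp_unit p q' v)
  then show ?case using gp_rel.gp_unit[where p=p and q="q' @ q"] by simp
next
  case (gp_mult p q' v a b)
  then show ?case using gp_rel.gp_mult[where p=p and q="q' @ q"] by simp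
next
  case (gp_comm p q' u v a b)
  then show ?case using gp_rel.gp_comm[where p=p and q="q' @ q"] by simp
qed (auto intro: gp_rel.intros)

lemma gp_rel_append_left: "R w w' \<Longrightarrow> p \<in> W \<Longrightarrow> R (p @ w) (p @ w')"
proof (induction rule: gp_rel.induct)
  case (gp_unit p' q v)
  then show ?case using gp_rel.gp_unit[where p="p @ p'" and q=q] by simp
next
  case (gp_mult p' q v a b)
  then show ?case using gp_rel.gp_mult[where p="p @ p'" and q=q] by simp
next
  case (gp_comm p' q u v a b)
  then show ?case using gp_rel.gp_comm[where p="p @ p'" and q=q] by simp
qed (auto intro: gp_rel.intros)

lemma gp_rel_append: "R w w' \<Longrightarrow> R q q' \<Longrightarrow> R (w @ q) (w' @ q')"
  by (meson gp_rel.gp_trans gp_rel_append_left gp_rel_append_right gp_rel_words)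

lemma gp_rel_mult_last:
  "\<lbrakk>p \<in> W; v \<in> V; a \<in> carrier (M v); b \<in> carrier (M v)\<rbrakk> \<Longrightarrow>
   R (p @ [(v, a), (v, b)]) (p @ [(v, a \<otimes>\<^bsub>M v\<^esub> b)])"
  using gp_rel.gp_mult[where p=p and q="[]"] by simp

lemma gp_rel_unit_last: "p \<in> W \<Longrightarrow> v \<in> V \<Longrightarrow> R (p @ [(v, \<one>\<^bsub>M v\<^esub>)]) p"
  using gp_rel.gp_unit[where p=p and q="[]"] by simp

lemma gp_rel_move_to_end:
  "\<lbrakk>r1 @ [(u, c)] @ r2 \<in> W; \<forall>l\<in>set r2. E u (fst l)\<rbrakk> \<Longrightarrow>
   R (r1 @ [(u, c)] @ r2) (r1 @ r2 @ [(u, c)])"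
proof (induction r2 arbitrary: r1)
  case Nil
  then show ?case by (auto intro: gp_rel.gp_refl)
next
  case (Cons l r2)
  then have "R (r1 @ [(u, c), (fst l, snd l)] @ r2) (r1 @ [(fst l, snd l), (u, c)] @ r2)"
    by (intro gp_rel.gp_comm) auto
  moreover have "R ((r1 @ [l]) @ [(u, c)] @ r2) ((r1 @ [l]) @ r2 @ [(u, c)])"
    using Cons.IH[of "r1 @ [l]"] Cons.prems by simp
  ultimately show ?case
    using gp_rel.gp_trans by fastforce
qed

lemma gp_class_eq: "R w w' \<Longrightarrow> cl w = cl w'"
  unfolding gp_class_def by (auto intro: gp_rel.gp_trans gp_rel.gp_sym)

lemma gp_class_eqD: "cl w = cl w' \<Longrightarrow> w' \<in> W \<Longrightarrow> R w w'"
  unfolding gp_class_def using gp_rel.gp_refl by blast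

lemma gp_mult_class: "p \<in> W \<Longrightarrow> q \<in> W \<Longrightarrow> cl p \<otimes>\<^bsub>C\<^esub> cl q = cl (p @ q)"
proof -
  assume p: "p \<in> W" and q: "q \<in> W"
  then have "p \<in> cl p" "q \<in> cl q"
    by (auto simp: gp_class_def intro: gp_rel.gp_refl)
  moreover have "cl (a @ b) = cl (p @ q)" if "a \<in> cl p" "b \<in> cl q" for a b
    using that by (metis gp_class_eq gp_class_def gp_rel_append mem_Collect_eq)
  ultimately have "(\<Union>a\<in>cl p. \<Union>b\<in>cl q. cl (a @ b)) = cl (p @ q)"
    by blast
  then show ?thesis
    by (simp add: graph_product_def)
qed

lemma lideal_gp_incl:
  assumes "v \<in> V" and "x \<in> carrier (M v)"
  shows "lideal C (gp_incl V E M v x) = {cl (p @ [(v, x)]) | p. p \<in> W}"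
proof -
  have "lideal C (gp_incl V E M v x) = {cl p \<otimes>\<^bsub>C\<^esub> cl [(v, x)] | p. p \<in> W}"
    unfolding lideal_def gp_incl_def by (auto simp: graph_product_def)
  also have "\<dots> = {cl (p @ [(v, x)]) | p. p \<in> W}"
    using assms
    by (auto simp: gp_mult_class) (metis gp_mult_class gp_words_Cons gp_words_Nil fst_conv snd_conv)
  finally show ?thesis .
qed

end

section \<open>Projection states\<close>

text \<open>A state assigns to each dependent set K (a vertex or a pair of non-adjacent vertices) the
  reduced projection of a word onto the letters with vertex in K; all other components are empty.\<close>
definition dependent :: "('v \<Rightarrow> 'v \<Rightarrow> bool) \<Rightarrow> 'v set \<Rightarrow> bool" where
  "dependent E K \<longleftrightarrow> (\<exists>x y. K = {x, y} \<and> \<not> E x y)"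

definition update_at ::
    "('v \<Rightarrow> 'v \<Rightarrow> bool) \<Rightarrow> ('v set \<Rightarrow> 'b list) \<Rightarrow> 'v \<Rightarrow> ('b list \<Rightarrow> 'b list) \<Rightarrow> 'v set \<Rightarrow> 'b list" where
  "update_at E P u f = (\<lambda>K. if u \<in> K \<and> dependent E K then f (P K) else P K)"

definition terminal :: "('v \<Rightarrow> 'v \<Rightarrow> bool) \<Rightarrow> ('v set \<Rightarrow> ('v \<times> 'a) list) \<Rightarrow> 'v \<Rightarrow> bool" where
  "terminal E P u \<longleftrightarrow> (\<forall>K. u \<in> K \<longrightarrow> dependent E K \<longrightarrow> P K \<noteq> [] \<and> fst (last (P K)) = u)"

text \<open>The last u-letter, if it can be commuted to the right end of the word, and 1 otherwise.\<close>
definition tail_value ::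
    "('v \<Rightarrow> 'v \<Rightarrow> bool) \<Rightarrow> ('v \<Rightarrow> 'a monoid) \<Rightarrow> ('v set \<Rightarrow> ('v \<times> 'a) list) \<Rightarrow> 'v \<Rightarrow> 'a" where
  "tail_value E M P u = (if terminal E P u then snd (last (P {u})) else \<one>\<^bsub>M u\<^esub>)"

definition strip_tail ::
    "('v \<Rightarrow> 'v \<Rightarrow> bool) \<Rightarrow> ('v set \<Rightarrow> ('v \<times> 'a) list) \<Rightarrow> 'v \<Rightarrow> 'v set \<Rightarrow> ('v \<times> 'a) list" where
  "strip_tail E P u = update_at E P u (if terminal E P u then butlast else id)"

definition push_tail :: "('v \<Rightarrow> 'v \<Rightarrow> bool) \<Rightarrow> ('v \<Rightarrow> 'a monoid) \<Rightarrow>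
    ('v set \<Rightarrow> ('v \<times> 'a) list) \<Rightarrow> 'v \<Rightarrow> 'a \<Rightarrow> 'v set \<Rightarrow> ('v \<times> 'a) list" where
  "push_tail E M P u d = (if d = \<one>\<^bsub>M u\<^esub> then P else update_at E P u (\<lambda>L. L @ [(u, d)]))"

definition act :: "('v \<Rightarrow> 'v \<Rightarrow> bool) \<Rightarrow> ('v \<Rightarrow> 'a monoid) \<Rightarrow>
    ('v set \<Rightarrow> ('v \<times> 'a) list) \<Rightarrow> 'v \<Rightarrow> 'a \<Rightarrow> 'v set \<Rightarrow> ('v \<times> 'a) list" where
  "act E M P u a = push_tail E M (strip_tail E P u) u (tail_value E M P u \<otimes>\<^bsub>M u\<^esub> a)"

definition act_update :: "('v \<Rightarrow> 'v \<Rightarrow> bool) \<Rightarrow> ('v \<Rightarrow> 'a monoid) \<Rightarrow>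
    ('v set \<Rightarrow> ('v \<times> 'a) list) \<Rightarrow> 'v \<Rightarrow> 'a \<Rightarrow> ('v \<times> 'a) list \<Rightarrow> ('v \<times> 'a) list" where
  "act_update E M P u a L = (if terminal E P u then butlast L else L) @
     (let d = tail_value E M P u \<otimes>\<^bsub>M u\<^esub> a in if d = \<one>\<^bsub>M u\<^esub> then [] else [(u, d)])"

definition proj_state ::
    "('v \<Rightarrow> 'v \<Rightarrow> bool) \<Rightarrow> ('v \<Rightarrow> 'a monoid) \<Rightarrow> ('v \<times> 'a) list \<Rightarrow> 'v set \<Rightarrow> ('v \<times> 'a) list" where
  "proj_state E M w = foldl (\<lambda>P l. act E M P (fst l) (snd l)) (\<lambda>K. []) w"

lemma act_eq_update_at: "act E M P u a = update_at E P u (act_update E M P u a)"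
  unfolding act_def push_tail_def strip_tail_def act_update_def by (auto simp: update_at_def Let_def)

lemma update_at_apply: "update_at E P u f K = (if u \<in> K \<and> dependent E K then f (P K) else P K)"
  by (simp add: update_at_def)

lemma update_at_update_at: "update_at E (update_at E P u f) u g = update_at E P u (g \<circ> f)"
  by (auto simp: update_at_def)

lemma update_at_id: "(\<And>K. u \<in> K \<Longrightarrow> dependent E K \<Longrightarrow> f (P K) = P K) \<Longrightarrow> update_at E P u f = P"
  by (auto simp: update_at_def)

lemma proj_state_snoc: "proj_state E M (w @ [l]) = act E M (proj_state E M w) (fst l) (snd l)"
  by (simp add: proj_state_def)

lemma proj_state_append_cong:
  "proj_state E M p = proj_state E M p' \<Longrightarrow> proj_state E M (p @ q) = proj_state E M (p' @ q)"
  by (simp add: proj_state_def)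

context graph_of_monoids
begin

lemma dependent_singleton: "dependent E {u}"
  using edge_irrefl unfolding dependent_def by blast

lemma dependent_pair: "\<not> E u x \<Longrightarrow> dependent E {u, x}"
  unfolding dependent_def by blast

lemma dependent_cases: "dependent E K \<Longrightarrow> u \<in> K \<Longrightarrow> \<exists>x. K = {u, x} \<and> \<not> E u x"
  unfolding dependent_def by (auto dest: edge_sym)

lemma dependent_not_adjacent: "E u w \<Longrightarrow> dependent E K \<Longrightarrow> u \<in> K \<Longrightarrow> w \<notin> K"
  by (metis edge_irrefl dependent_cases insert_iff singletonD)

lemma update_at_commute:
  "E u w \<Longrightarrow> update_at E (update_at E P u f) w g = update_at E (update_at E P w g) u f"
  using dependent_not_adjacent by (fastforce simp: update_at_def)

lemma update_at_other: "E u w \<Longrightarrow> w \<in> K \<Longrightarrow> dependent E K \<Longrightarrow> update_at E P u f K = P K"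
  using dependent_not_adjacent[OF edge_sym] by (auto simp: update_at_apply)

lemma terminal_tail_value_cong:
  assumes "\<And>K. u \<in> K \<Longrightarrow> dependent E K \<Longrightarrow> P K = P' K"
  shows "terminal E P u = terminal E P' u" and "tail_value E M P u = tail_value E M P' u"
  using assms dependent_singleton by (auto simp: terminal_def tail_value_def)

lemma act_update_cong:
  assumes "\<And>K. u \<in> K \<Longrightarrow> dependent E K \<Longrightarrow> P K = P' K"
  shows "act_update E M P u a = act_update E M P' u a"
  using terminal_tail_value_cong[OF assms] by (simp add: act_update_def fun_eq_iff)

lemma act_commute:
  assumes "E u w"
  shows "act E M (act E M P u a) w b = act E M (act E M P w b) u a"
proof -
  have u: "act_update E M (update_at E P u f) w b = act_update E M P w b" for f
    by (rule act_update_cong) (rule update_at_other[OF assms])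
  have w: "act_update E M (update_at E P w g) u a = act_update E M P u a" for g
    by (rule act_update_cong) (rule update_at_other[OF edge_sym[OF assms]])
  have "act E M (act E M P u a) w b
      = update_at E (update_at E P u (act_update E M P u a)) w (act_update E M P w b)"
    unfolding act_eq_update_at[of E M "act E M P u a" w b]
    unfolding act_eq_update_at[of E M P u a] u ..
  also have "\<dots> = update_at E (update_at E P w (act_update E M P w b)) u (act_update E M P u a)"
    by (rule update_at_commute[OF assms])
  also have "\<dots> = act E M (act E M P w b) u a"
    unfolding act_eq_update_at[of E M "act E M P w b" u a]
    unfolding act_eq_update_at[of E M P w b] w ..
  finally show ?thesis .
qed

end

definition count_at :: "'v \<Rightarrow> ('v \<times> 'a) list \<Rightarrow> nat" where
  "count_at u A = length (filter (\<lambda>l. fst l = u) A)"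

lemma count_at_simps [simp]:
  "count_at u [] = 0"
  "count_at u (l # A) = (if fst l = u then Suc (count_at u A) else count_at u A)"
  "count_at u (A @ B) = count_at u A + count_at u B"
  by (simp_all add: count_at_def)

text \<open>The third clause says that two consecutive letters of the projection to u are separated by
  a letter of a vertex not adjacent to u; otherwise they could be merged.\<close>
definition reduced_state ::
    "('v \<Rightarrow> 'v \<Rightarrow> bool) \<Rightarrow> ('v \<Rightarrow> 'a monoid) \<Rightarrow> ('v set \<Rightarrow> ('v \<times> 'a) list) \<Rightarrow> bool" where
  "reduced_state E M P \<longleftrightarrow>
     (\<forall>K l. l \<in> set (P K) \<longrightarrow> fst l \<in> K \<and> snd l \<in> carrier (M (fst l)) \<and> snd l \<noteq> \<one>\<^bsub>M (fst l)\<^esub>) \<and>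
     (\<forall>K u. dependent E K \<longrightarrow> u \<in> K \<longrightarrow> filter (\<lambda>l. fst l = u) (P K) = P {u}) \<and>
     (\<forall>u i. Suc i < length (P {u}) \<longrightarrow>
        (\<exists>x A l B. x \<noteq> u \<and> \<not> E u x \<and> P {u, x} = A @ [l] @ B \<and> fst l = x \<and> count_at u A = Suc i))"

context graph_of_monoids
begin

lemma reduced_stateI:
  assumes "\<And>K l. l \<in> set (P K) \<Longrightarrow> fst l \<in> K \<and> snd l \<in> carrier (M (fst l)) \<and> snd l \<noteq> \<one>\<^bsub>M (fst l)\<^esub>"
    and "\<And>K u. dependent E K \<Longrightarrow> u \<in> K \<Longrightarrow> filter (\<lambda>l. fst l = u) (P K) = P {u}"
    and "\<And>u i. Suc i < length (P {u}) \<Longrightarrow>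
        \<exists>x A l B. x \<noteq> u \<and> \<not> E u x \<and> P {u, x} = A @ [l] @ B \<and> fst l = x \<and> count_at u A = Suc i"
  shows "reduced_state E M P"
  using assms unfolding reduced_state_def by blast

lemma reduced_letter:
  "reduced_state E M P \<Longrightarrow> l \<in> set (P K) \<Longrightarrow>
   fst l \<in> K \<and> snd l \<in> carrier (M (fst l)) \<and> snd l \<noteq> \<one>\<^bsub>M (fst l)\<^esub>"
  unfolding reduced_state_def by blast

lemma reduced_filter:
  "reduced_state E M P \<Longrightarrow> dependent E K \<Longrightarrow> u \<in> K \<Longrightarrow> filter (\<lambda>l. fst l = u) (P K) = P {u}"
  unfolding reduced_state_def by blast

lemma reduced_separated:
  "reduced_state E M P \<Longrightarrow> Suc i < length (P {u}) \<Longrightarrow>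
   \<exists>x A l B. x \<noteq> u \<and> \<not> E u x \<and> P {u, x} = A @ [l] @ B \<and> fst l = x \<and> count_at u A = Suc i"
  unfolding reduced_state_def by blast

lemma reduced_count_at:
  "reduced_state E M P \<Longrightarrow> dependent E K \<Longrightarrow> u \<in> K \<Longrightarrow> count_at u (P K) = length (P {u})"
  using reduced_filter by (simp add: count_at_def)

lemma terminal_component:
  assumes P: "reduced_state E M P" and T: "terminal E P u" and K: "u \<in> K" "dependent E K"
  shows "P K = butlast (P K) @ [(u, tail_value E M P u)]"
proof -
  define c where "c = snd (last (P K))"
  have "P K \<noteq> []" and "fst (last (P K)) = u"
    using T K unfolding terminal_def by auto
  then have PK: "P K = butlast (P K) @ [(u, c)]"
    unfolding c_def by (metis append_butlast_last_id prod.collapse)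
  have "P {u} = filter (\<lambda>l. fst l = u) (P K)"
    using reduced_filter[OF P K(2,1)] by simp
  also have "\<dots> = filter (\<lambda>l. fst l = u) (butlast (P K)) @ [(u, c)]"
    by (subst PK) simp
  finally have "tail_value E M P u = c"
    using T by (simp add: tail_value_def)
  then show ?thesis
    using PK by simp
qed

lemma terminal_tail_value:
  assumes "reduced_state E M P" and "terminal E P u"
  shows "tail_value E M P u \<in> carrier (M u)" and "tail_value E M P u \<noteq> \<one>\<^bsub>M u\<^esub>"
proof -
  have "(u, tail_value E M P u) \<in> set (P {u})"
    using terminal_component[OF assms singletonI dependent_singleton] by (metis in_set_conv_decomp)
  then show "tail_value E M P u \<in> carrier (M u)" and "tail_value E M P u \<noteq> \<one>\<^bsub>M u\<^esub>"
    using reduced_letter[OF assms(1)] by fastforce+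
qed

lemma tail_value_closed: "reduced_state E M P \<Longrightarrow> u \<in> V \<Longrightarrow> tail_value E M P u \<in> carrier (M u)"
  using terminal_tail_value(1) monoid.one_closed[OF monoid] by (auto simp: tail_value_def)

lemma strip_tail_terminal: "terminal E P u \<Longrightarrow> strip_tail E P u = update_at E P u butlast"
  by (simp add: strip_tail_def)

lemma strip_tail_not_terminal: "\<not> terminal E P u \<Longrightarrow> strip_tail E P u = P"
  by (simp add: strip_tail_def update_at_id)

lemma count_at_zero: "count_at u A = 0 \<longleftrightarrow> (\<forall>l\<in>set A. fst l \<noteq> u)"
  by (simp add: count_at_def filter_empty_conv)

text \<open>Removing the last letter of u exposes, in some pair projection, a letter of a non-adjacent
  vertex: this is where the separation clause of the invariant is needed.\<close>
lemma not_terminal_strip_tail: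
  assumes P: "reduced_state E M P"
  shows "\<not> terminal E (strip_tail E P u) u"
proof (cases "terminal E P u")
  case False
  then show ?thesis by (simp add: strip_tail_not_terminal)
next
  case T: True
  let ?Q = "update_at E P u butlast"
  have ne: "P {u} \<noteq> []"
    using T dependent_singleton unfolding terminal_def by blast
  have "\<not> terminal E ?Q u"
  proof (cases "length (P {u}) = 1")
    case True
    then have "?Q {u} = []"
      using dependent_singleton by (auto simp: update_at_apply length_Suc_conv)
    then show ?thesis
      using dependent_singleton unfolding terminal_def by blast
  next
    case False
    moreover have "length (P {u}) \<noteq> 0"
      using ne by simp
    ultimately have n2: "length (P {u}) \<ge> 2"
      by linarith
    then have "Suc (length (P {u}) - 2) < length (P {u})"
      by linarith
    from reduced_separated[OF P this] obtain x A l B where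
      x: "x \<noteq> u" "\<not> E u x" and PK: "P {u, x} = A @ [l] @ B" and l: "fst l = x"
      and cA: "count_at u A = Suc (length (P {u}) - 2)" by blast
    have K: "dependent E {u, x}" using dependent_pair[OF x(2)] .
    have "fst (last (P {u, x})) = u"
      using T K unfolding terminal_def by blast
    then have B: "B \<noteq> []" "fst (last B) = u"
      using PK l x(1) by (cases "B = []"; simp)+
    have "count_at u B = 1"
      using reduced_count_at[OF P K, of u] cA PK l x(1) n2 by simp
    moreover have "count_at u B = count_at u (butlast B) + 1"
    proof -
      have "count_at u (butlast B @ [last B]) = count_at u (butlast B) + 1"
        using B(2) by simp
      then show ?thesis
        by (simp only: append_butlast_last_id[OF B(1)])
    qed
    ultimately have "\<forall>l'\<in>set (butlast B). fst l' \<noteq> u"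
      by (simp add: count_at_zero[symmetric])
    moreover have "?Q {u, x} = A @ [l] @ butlast B"
      using PK B(1) K by (simp add: update_at_apply butlast_append)
    ultimately have "fst (last (?Q {u, x})) \<noteq> u"
      using l x(1) by (cases "butlast B = []") auto
    then show ?thesis
      using K unfolding terminal_def by blast
  qed
  then show ?thesis
    using T by (simp add: strip_tail_terminal)
qed

lemma terminal_update_at_append: "terminal E (update_at E P u (\<lambda>L. L @ [(u, d)])) u"
  by (auto simp: terminal_def update_at_apply)

lemma strip_push_tail: "\<not> terminal E P u \<Longrightarrow> strip_tail E (push_tail E M P u d) u = P"
  by (simp add: push_tail_def strip_tail_not_terminal strip_tail_terminal terminal_update_at_append
      update_at_update_at comp_def update_at_id)

lemma tail_value_push_tail: "\<not> terminal E P u \<Longrightarrow> tail_value E M (push_tail E M P u d) u = d"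
  using terminal_update_at_append[of P u d] dependent_singleton[of u]
  by (simp add: push_tail_def tail_value_def update_at_apply)

lemma push_strip_tail:
  assumes "reduced_state E M P"
  shows "push_tail E M (strip_tail E P u) u (tail_value E M P u) = P"
proof (cases "terminal E P u")
  case True
  have "update_at E P u (\<lambda>L. butlast L @ [(u, tail_value E M P u)]) = P"
    using terminal_component[OF assms True] by (intro update_at_id) simp
  then show ?thesis
    using terminal_tail_value(2)[OF assms True]
    by (simp add: push_tail_def strip_tail_terminal[OF True] update_at_update_at comp_def)
next
  case False
  then show ?thesis by (simp add: push_tail_def tail_value_def strip_tail_not_terminal)
qed

lemma tail_value_act:
  "reduced_state E M P \<Longrightarrow> tail_value E M (act E M P u a) u = tail_value E M P u \<otimes>\<^bsub>M u\<^esub> a"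
  by (simp add: act_def tail_value_push_tail not_terminal_strip_tail)

lemma strip_tail_act: "reduced_state E M P \<Longrightarrow> strip_tail E (act E M P u a) u = strip_tail E P u"
  by (simp add: act_def strip_push_tail not_terminal_strip_tail)

lemma act_mult:
  assumes P: "reduced_state E M P" and u: "u \<in> V" and "a \<in> carrier (M u)" "b \<in> carrier (M u)"
  shows "act E M (act E M P u a) u b = act E M P u (a \<otimes>\<^bsub>M u\<^esub> b)"
proof -
  have assoc: "tail_value E M P u \<otimes>\<^bsub>M u\<^esub> a \<otimes>\<^bsub>M u\<^esub> b = tail_value E M P u \<otimes>\<^bsub>M u\<^esub> (a \<otimes>\<^bsub>M u\<^esub> b)"
    using monoid.m_assoc[OF monoid[OF u] tail_value_closed[OF P u]] assms(3,4) .
  show ?thesis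
    unfolding act_def[of E M "act E M P u a"] strip_tail_act[OF P] tail_value_act[OF P] assoc
    by (simp only: act_def)
qed

lemma act_one: "reduced_state E M P \<Longrightarrow> u \<in> V \<Longrightarrow> act E M P u \<one>\<^bsub>M u\<^esub> = P"
  using tail_value_closed monoid.r_one[OF monoid] by (simp add: act_def push_strip_tail)

lemma reduced_empty: "reduced_state E M (\<lambda>K. [])"
  by (rule reduced_stateI) auto

lemma reduced_strip_tail:
  assumes P: "reduced_state E M P"
  shows "reduced_state E M (strip_tail E P u)"
proof (cases "terminal E P u")
  case False
  then show ?thesis using P by (simp add: strip_tail_not_terminal)
next
  case T: True
  define c where "c = tail_value E M P u"
  have PK: "P K = butlast (P K) @ [(u, c)]" if "u \<in> K" "dependent E K" for K
    unfolding c_def using terminal_component[OF P T that] .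
  let ?Q = "update_at E P u butlast"
  have "reduced_state E M ?Q"
  proof (rule reduced_stateI)
    fix K l
    assume "l \<in> set (?Q K)"
    then have "l \<in> set (P K)"
      by (auto simp: update_at_apply split: if_splits dest: in_set_butlastD)
    then show "fst l \<in> K \<and> snd l \<in> carrier (M (fst l)) \<and> snd l \<noteq> \<one>\<^bsub>M (fst l)\<^esub>"
      using reduced_letter[OF P] by blast
  next
    fix K w
    assume K: "dependent E K" and w: "w \<in> K"
    show "filter (\<lambda>l. fst l = w) (?Q K) = ?Q {w}"
    proof (cases "u \<in> K")
      case False
      then show ?thesis using reduced_filter[OF P K w] w by (auto simp: update_at_apply)
    next
      case True
      have F: "filter (\<lambda>l. fst l = w) (butlast (P K) @ [(u, c)]) = P {w}"
        using reduced_filter[OF P K w] PK[OF True K] by simp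
      show ?thesis
      proof (cases "w = u")
        case True
        then have "filter (\<lambda>l. fst l = u) (butlast (P K)) = butlast (P {u})"
          using arg_cong[OF F, of butlast] by simp
        then show ?thesis
          using True \<open>u \<in> K\<close> K dependent_singleton by (simp add: update_at_apply)
      next
        case False
        then show ?thesis
          using F \<open>u \<in> K\<close> K by (simp add: update_at_apply)
      qed
    qed
  next
    fix w i
    assume i: "Suc i < length (?Q {w})"
    show "\<exists>x A l B. x \<noteq> w \<and> \<not> E w x \<and> ?Q {w, x} = A @ [l] @ B \<and> fst l = x \<and> count_at w A = Suc i"
    proof (cases "w = u")
      case True
      then have "Suc i < length (P {u})"
        using i dependent_singleton by (simp add: update_at_apply)
      then obtain x A l B where x: "x \<noteq> u" "\<not> E u x" "P {u, x} = A @ [l] @ B" "fst l = x"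
          "count_at u A = Suc i"
        using reduced_separated[OF P] by metis
      have K: "dependent E {u, x}" using dependent_pair[OF x(2)] .
      have "count_at u B \<noteq> 0"
        using reduced_count_at[OF P K, of u] x \<open>Suc i < length (P {u})\<close> by simp
      then have "B \<noteq> []" by auto
      then have "?Q {u, x} = A @ [l] @ butlast B"
        using x(3) K by (simp add: update_at_apply butlast_append)
      then show ?thesis using x True by blast
    next
      case False
      then have Qw: "?Q {w} = P {w}" by (simp add: update_at_apply)
      with i obtain x A l B where x: "x \<noteq> w" "\<not> E w x" "P {w, x} = A @ [l] @ B" "fst l = x"
          "count_at w A = Suc i"
        using reduced_separated[OF P] by metis
      have K: "dependent E {w, x}" using dependent_pair[OF x(2)] .
      consider "x \<noteq> u" | "x = u" "B \<noteq> []" | "x = u" "B = []" by blast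
      then show ?thesis
      proof cases
        case 1
        then have "?Q {w, x} = A @ [l] @ B" using x \<open>w \<noteq> u\<close> by (simp add: update_at_apply)
        then show ?thesis using x by blast
      next
        case 2
        then have "?Q {w, x} = A @ [l] @ butlast B"
          using x(3) K by (simp add: update_at_apply butlast_append)
        then show ?thesis using x by blast
      next
        case 3
        then have "length (P {w}) = Suc i"
          using reduced_count_at[OF P K, of w] x \<open>w \<noteq> u\<close> by simp
        then show ?thesis using i Qw by simp
      qed
    qed
  qed
  then show ?thesis
    using T by (simp add: strip_tail_terminal)
qed

lemma reduced_push_tail:
  assumes P: "reduced_state E M P" and nT: "\<not> terminal E P u" and d: "d \<in> carrier (M u)"
  shows "reduced_state E M (push_tail E M P u d)"
proof (cases "d = \<one>\<^bsub>M u\<^esub>")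
  case True
  then show ?thesis using P by (simp add: push_tail_def)
next
  case d1: False
  let ?Q = "update_at E P u (\<lambda>L. L @ [(u, d)])"
  have "reduced_state E M ?Q"
  proof (rule reduced_stateI)
    fix K l
    assume "l \<in> set (?Q K)"
    then have "l \<in> set (P K) \<or> (u \<in> K \<and> l = (u, d))"
      by (auto simp: update_at_apply split: if_splits)
    then show "fst l \<in> K \<and> snd l \<in> carrier (M (fst l)) \<and> snd l \<noteq> \<one>\<^bsub>M (fst l)\<^esub>"
      using reduced_letter[OF P, of l K] d d1 by auto
  next
    fix K w
    assume "dependent E K" and "w \<in> K"
    then show "filter (\<lambda>l. fst l = w) (?Q K) = ?Q {w}"
      using reduced_filter[OF P] dependent_singleton by (auto simp: update_at_apply)
  next
    fix w i
    assume i: "Suc i < length (?Q {w})"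
    show "\<exists>x A l B. x \<noteq> w \<and> \<not> E w x \<and> ?Q {w, x} = A @ [l] @ B \<and> fst l = x \<and> count_at w A = Suc i"
    proof (cases "w = u \<longrightarrow> Suc i < length (P {u})")
      case True
      then have "Suc i < length (P {w})"
        using i by (cases "w = u") (auto simp: update_at_apply)
      then obtain x A l B where x: "x \<noteq> w" "\<not> E w x" "P {w, x} = A @ [l] @ B" "fst l = x"
          "count_at w A = Suc i"
        using reduced_separated[OF P] by metis
      then have "?Q {w, x} = A @ [l] @ (if u \<in> {w, x} then B @ [(u, d)] else B)"
        using dependent_pair[OF x(2)] by (simp add: update_at_apply)
      then show ?thesis using x by blast
    next
      case False
      then have w: "w = u" and len: "length (P {u}) = Suc i"
        using i dependent_singleton by (auto simp: update_at_apply)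
      from nT obtain K where uK: "u \<in> K" and K: "dependent E K"
          and not_last: "\<not> (P K \<noteq> [] \<and> fst (last (P K)) = u)"
        unfolding terminal_def by blast
      obtain x where Kx: "K = {u, x}" "\<not> E u x"
        using dependent_cases[OF K uK] by blast
      have "count_at u (P K) = Suc i"
        using reduced_count_at[OF P K uK] len by simp
      then have ne: "P K \<noteq> []" by auto
      then have "fst (last (P K)) \<in> K" "fst (last (P K)) \<noteq> u"
        using reduced_letter[OF P, of "last (P K)" K] not_last by auto
      then have fx: "fst (last (P K)) = x" and xu: "x \<noteq> u"
        using Kx by auto
      have PK: "P K = butlast (P K) @ [last (P K)]"
        using ne by simp
      have "count_at u (butlast (P K)) = Suc i"
        using \<open>count_at u (P K) = Suc i\<close> \<open>fst (last (P K)) \<noteq> u\<close>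
        by (subst (asm) PK) simp
      moreover have "?Q {u, x} = butlast (P K) @ [last (P K)] @ [(u, d)]"
        using Kx K PK by (simp add: update_at_apply)
      ultimately show ?thesis
        using xu Kx(2) fx w by blast
    qed
  qed
  then show ?thesis
    using d1 by (simp add: push_tail_def)
qed

lemma reduced_act:
  "reduced_state E M P \<Longrightarrow> u \<in> V \<Longrightarrow> a \<in> carrier (M u) \<Longrightarrow> reduced_state E M (act E M P u a)"
  unfolding act_def
  by (intro reduced_push_tail reduced_strip_tail not_terminal_strip_tail
      monoid.m_closed[OF monoid] tail_value_closed)

lemma reduced_proj_state: "w \<in> W \<Longrightarrow> reduced_state E M (proj_state E M w)"
proof (induction w rule: rev_induct)
  case Nil
  then show ?case by (simp add: proj_state_def reduced_empty)
next
  case (snoc l w)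
  then show ?case by (simp add: proj_state_snoc reduced_act)
qed

lemma proj_state_gp_rel: "R w w' \<Longrightarrow> proj_state E M w = proj_state E M w'"
proof (induction rule: gp_rel.induct)
  case (gp_unit p q v)
  then have "proj_state E M (p @ [(v, \<one>\<^bsub>M v\<^esub>)]) = proj_state E M p"
    by (simp add: proj_state_snoc act_one reduced_proj_state)
  from proj_state_append_cong[OF this, of q] show ?case by simp
next
  case (gp_mult p q v a b)
  then have "proj_state E M (p @ [(v, a), (v, b)]) = proj_state E M (p @ [(v, a \<otimes>\<^bsub>M v\<^esub> b)])"
    using proj_state_snoc[of E M "p @ [(v, a)]"]
    by (simp add: proj_state_snoc act_mult reduced_proj_state)
  from proj_state_append_cong[OF this, of q] show ?case by simp
next
  case (gp_comm p q u v a b)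
  then have "proj_state E M (p @ [(u, a), (v, b)]) = proj_state E M (p @ [(v, b), (u, a)])"
    using proj_state_snoc[of E M "p @ [(u, a)]"] proj_state_snoc[of E M "p @ [(v, b)]"]
    by (simp add: proj_state_snoc) (rule act_commute)
  from proj_state_append_cong[OF this, of q] show ?case by simp
qed auto

lemma tail_value_right_multiple:
  assumes "p \<in> W" and "R w (p @ [(v, x)])" and "v \<in> V" and "x \<in> carrier (M v)"
  shows "tail_value E M (proj_state E M w) v \<in> lideal (M v) x"
proof -
  have "tail_value E M (proj_state E M w) v = tail_value E M (proj_state E M p) v \<otimes>\<^bsub>M v\<^esub> x"
    using proj_state_gp_rel[OF assms(2)] assms(1)
    by (simp add: proj_state_snoc tail_value_act reduced_proj_state)
  then show ?thesis
    using assms tail_value_closed reduced_proj_state unfolding lideal_def by blast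
qed

end

section \<open>Realizing states by words\<close>

definition projections :: "('v \<Rightarrow> 'v \<Rightarrow> bool) \<Rightarrow> ('v \<times> 'a) list \<Rightarrow> 'v set \<Rightarrow> ('v \<times> 'a) list" where
  "projections E r = (\<lambda>K. if dependent E K then filter (\<lambda>l. fst l \<in> K) r else [])"

lemma projections_Nil: "projections E [] = (\<lambda>K. [])"
  by (simp add: projections_def fun_eq_iff)

lemma projections_snoc:
  "projections E (r @ [(u, a)]) = update_at E (projections E r) u (\<lambda>L. L @ [(u, a)])"
  by (auto simp: projections_def update_at_def)

context graph_of_monoids
begin

lemma projections_terminal_split:
  assumes T: "terminal E (projections E r) u"
  obtains r1 r2 where "r = r1 @ [(u, tail_value E M (projections E r) u)] @ r2"
    and "\<forall>l\<in>set r2. E u (fst l)"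
proof -
  have "projections E r {u} \<noteq> []"
    using T dependent_singleton unfolding terminal_def by blast
  then have "\<exists>l\<in>set r. fst l = u"
    using dependent_singleton by (auto simp: projections_def filter_empty_conv)
  from split_list_last_prop[OF this] obtain r1 l r2 where
    r: "r = r1 @ l # r2" and l: "fst l = u" and r2: "\<forall>l'\<in>set r2. fst l' \<noteq> u" by blast
  have adj: "\<forall>l'\<in>set r2. E u (fst l')"
  proof (rule ballI, rule ccontr)
    fix l' assume "l' \<in> set r2" and "\<not> E u (fst l')"
    let ?K = "{u, fst l'}"
    have K: "dependent E ?K" using dependent_pair[OF \<open>\<not> E u (fst l')\<close>] .
    let ?F = "filter (\<lambda>l. fst l \<in> ?K) r2"
    have "?F \<noteq> []" using \<open>l' \<in> set r2\<close> by (auto simp: filter_empty_conv)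
    then have "last (projections E r ?K) = last ?F"
      using K l unfolding r by (simp add: projections_def)
    moreover have "fst (last ?F) \<noteq> u"
      using r2 last_in_set[OF \<open>?F \<noteq> []\<close>] by auto
    moreover have "fst (last (projections E r ?K)) = u"
      using T K unfolding terminal_def by blast
    ultimately show False by simp
  qed
  have "filter (\<lambda>l. fst l \<in> {u}) r2 = []"
    using r2 by (auto simp: filter_empty_conv)
  then have "last (projections E r {u}) = l"
    using dependent_singleton r l by (simp add: projections_def)
  then have l_eq: "l = (u, tail_value E M (projections E r) u)"
    using T l by (simp add: tail_value_def prod_eq_iff)
  have "r = r1 @ [l] @ r2"
    using r by simp
  then show ?thesis
    using adj unfolding l_eq by (rule that)
qed

lemma projections_remove:
  assumes "\<forall>l\<in>set r2. E u (fst l)"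
  shows "projections E (r1 @ r2) = update_at E (projections E (r1 @ [(u, c)] @ r2)) u butlast"
proof -
  have "filter (\<lambda>l. fst l \<in> K) r2 = []" if "dependent E K" "u \<in> K" for K
    using assms dependent_not_adjacent[OF _ that] by (auto simp: filter_empty_conv)
  then show ?thesis
    by (auto simp: projections_def update_at_def fun_eq_iff)
qed

lemma projections_strip_tail:
  assumes r: "r \<in> W" and u: "u \<in> V"
  shows "\<exists>r'. R r (r' @ [(u, tail_value E M (projections E r) u)]) \<and>
    projections E r' = strip_tail E (projections E r) u"
proof (cases "terminal E (projections E r) u")
  case False
  then have "R r (r @ [(u, tail_value E M (projections E r) u)])"
    using gp_rel_unit_last[OF r u] by (simp add: tail_value_def gp_rel.gp_sym)
  then show ?thesis
    using False by (auto simp: strip_tail_not_terminal)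
next
  case True
  define c where "c = tail_value E M (projections E r) u"
  obtain r1 r2 where r12: "r = r1 @ [(u, c)] @ r2" and adj: "\<forall>l\<in>set r2. E u (fst l)"
    using projections_terminal_split[OF True] unfolding c_def by blast
  have "R r ((r1 @ r2) @ [(u, c)])"
    using gp_rel_move_to_end[OF _ adj] r unfolding r12 by simp
  moreover have "projections E (r1 @ r2) = strip_tail E (projections E r) u"
    using projections_remove[OF adj, of r1 c] strip_tail_terminal[OF True] unfolding r12 by simp
  ultimately show ?thesis
    unfolding c_def by blast
qed

lemma projections_push_tail:
  assumes r: "r \<in> W" and u: "u \<in> V" and d: "d \<in> carrier (M u)"
  shows "\<exists>r'. R (r @ [(u, d)]) r' \<and> projections E r' = push_tail E M (projections E r) u d"
proof (cases "d = \<one>\<^bsub>M u\<^esub>")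
  case True
  then show ?thesis
    using gp_rel_unit_last[OF r u] by (auto simp: push_tail_def)
next
  case False
  have "R (r @ [(u, d)]) (r @ [(u, d)])"
    using r u d by (simp add: gp_rel.gp_refl)
  then show ?thesis
    using False by (auto simp: push_tail_def projections_snoc)
qed

lemma proj_state_realized: "w \<in> W \<Longrightarrow> \<exists>r. R w r \<and> projections E r = proj_state E M w"
proof (induction w rule: rev_induct)
  case Nil
  have "R [] []" by (simp add: gp_rel.gp_refl)
  then show ?case by (auto simp: projections_Nil proj_state_def)
next
  case (snoc l w)
  obtain u a where l: "l = (u, a)" by fastforce
  with snoc.prems have w: "w \<in> W" and u: "u \<in> V" and a: "a \<in> carrier (M u)" by auto
  from snoc.IH[OF w] obtain r where wr: "R w r" and P: "projections E r = proj_state E M w" by blast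
  let ?c = "tail_value E M (proj_state E M w) u"
  have r: "r \<in> W" using gp_rel_words[OF wr] by simp
  have c: "?c \<in> carrier (M u)" using tail_value_closed[OF reduced_proj_state[OF w] u] .
  from projections_strip_tail[OF r u] obtain r' where rr': "R r (r' @ [(u, ?c)])"
      and P': "projections E r' = strip_tail E (proj_state E M w) u"
    unfolding P by blast
  have r': "r' \<in> W" using gp_rel_words[OF rr'] by simp
  obtain r'' where r''_rel: "R (r' @ [(u, ?c \<otimes>\<^bsub>M u\<^esub> a)]) r''"
      and r'': "projections E r'' = push_tail E M (projections E r') u (?c \<otimes>\<^bsub>M u\<^esub> a)"
    using projections_push_tail[OF r' u monoid.m_closed[OF monoid[OF u] c a]] by blast
  have "R (w @ [(u, a)]) (r' @ [(u, ?c), (u, a)])"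
    using gp_rel_append[OF gp_rel.gp_trans[OF wr rr'] gp_rel.gp_refl[of "[(u, a)]"]] u a by simp
  also have "R \<dots> (r' @ [(u, ?c \<otimes>\<^bsub>M u\<^esub> a)])"
    by (rule gp_rel_mult_last[OF r' u c a])
  also note r''_rel
  finally have "R (w @ [l]) r''"
    unfolding l .
  moreover have "projections E r'' = proj_state E M (w @ [l])"
    unfolding r'' P' l by (simp add: proj_state_snoc act_def)
  ultimately show ?case by blast
qed

lemma gp_rel_split_tail:
  assumes w: "w \<in> W" and v: "v \<in> V"
  shows "\<exists>Z\<in>W. R w (Z @ [(v, tail_value E M (proj_state E M w) v)])"
proof -
  obtain r where wr: "R w r" and P: "projections E r = proj_state E M w"
    using proj_state_realized[OF w] by blast
  have "r \<in> W" using gp_rel_words[OF wr] by simp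
  from projections_strip_tail[OF this v] obtain Z
    where "R r (Z @ [(v, tail_value E M (proj_state E M w) v)])"
    unfolding P by blast
  with wr have split: "R w (Z @ [(v, tail_value E M (proj_state E M w) v)])"
    by (rule gp_rel.gp_trans)
  moreover have "Z \<in> W"
    using gp_rel_words[OF split] by simp
  ultimately show ?thesis by blast
qed

end

section \<open>Left ideals generated by elements of a factor\<close>

lemma (in monoid) mem_lideal_self: "z \<in> carrier G \<Longrightarrow> z \<in> lideal G z"
  unfolding lideal_def by (metis (mono_tags, lifting) l_one one_closed mem_Collect_eq)

context graph_of_monoids
begin

lemma gp_class_mem_lideal:
  assumes v: "v \<in> V" and x: "x \<in> carrier (M v)" and Z: "Z \<in> W" and t: "t \<in> lideal (M v) x"
  shows "cl (Z @ [(v, t)]) \<in> lideal C (gp_incl V E M v x)"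
proof -
  obtain c where c: "c \<in> carrier (M v)" and "t = c \<otimes>\<^bsub>M v\<^esub> x"
    using t unfolding lideal_def by blast
  then have "R ((Z @ [(v, c)]) @ [(v, x)]) (Z @ [(v, t)])"
    using gp_rel_mult_last[OF Z v c x] by simp
  then have "cl (Z @ [(v, t)]) = cl ((Z @ [(v, c)]) @ [(v, x)])"
    by (rule gp_class_eq[symmetric])
  moreover have "Z @ [(v, c)] \<in> W"
    using Z v c by simp
  ultimately show ?thesis
    unfolding lideal_gp_incl[OF v x] by blast
qed

text \<open>A common left multiple in C is a left multiple of its v-tail, which lies in both
  left ideals of the factor.\<close>
lemma gp_lideal_inter_tail:
  assumes v: "v \<in> V" and x: "x \<in> carrier (M v)" and y: "y \<in> carrier (M v)"
    and X: "X \<in> lideal C (gp_incl V E M v x) \<inter> lideal C (gp_incl V E M v y)"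
  obtains Z t where "Z \<in> W" and "t \<in> lideal (M v) x \<inter> lideal (M v) y" and "X = cl (Z @ [(v, t)])"
proof -
  obtain p q where p: "p \<in> W" and q: "q \<in> W"
    and Xp: "X = cl (p @ [(v, x)])" and Xq: "X = cl (q @ [(v, y)])"
    using X by (auto simp: lideal_gp_incl[OF v x] lideal_gp_incl[OF v y])
  define w where "w = p @ [(v, x)]"
  have w: "w \<in> W" using p v x unfolding w_def by simp
  have wq: "R w (q @ [(v, y)])"
    using gp_class_eqD Xp Xq q v y unfolding w_def by simp
  let ?t = "tail_value E M (proj_state E M w) v"
  have "?t \<in> lideal (M v) x"
    using tail_value_right_multiple[OF p _ v x] gp_rel.gp_refl[OF w] unfolding w_def by blast
  moreover have "?t \<in> lideal (M v) y"
    using tail_value_right_multiple[OF q wq v y] .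
  moreover obtain Z where "Z \<in> W" and "R w (Z @ [(v, ?t)])"
    using gp_rel_split_tail[OF w v] by blast
  moreover from this(2) have "X = cl (Z @ [(v, ?t)])"
    unfolding Xp w_def[symmetric] by (rule gp_class_eq)
  ultimately show ?thesis
    by (intro that) auto
qed

lemma gp_lideals_disjoint_iff:
  assumes v: "v \<in> V" and x: "x \<in> carrier (M v)" and y: "y \<in> carrier (M v)"
  shows "lideal C (gp_incl V E M v x) \<inter> lideal C (gp_incl V E M v y) = {} \<longleftrightarrow>
    lideal (M v) x \<inter> lideal (M v) y = {}"
proof
  assume "lideal C (gp_incl V E M v x) \<inter> lideal C (gp_incl V E M v y) = {}"
  then show "lideal (M v) x \<inter> lideal (M v) y = {}"
    using gp_class_mem_lideal[OF v x, of "[]"] gp_class_mem_lideal[OF v y, of "[]"] by auto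
next
  assume "lideal (M v) x \<inter> lideal (M v) y = {}"
  then show "lideal C (gp_incl V E M v x) \<inter> lideal C (gp_incl V E M v y) = {}"
    using gp_lideal_inter_tail[OF v x y] by blast
qed

lemma gp_lideals_inter_eq:
  assumes v: "v \<in> V" and x: "x \<in> carrier (M v)" and y: "y \<in> carrier (M v)"
    and z: "z \<in> carrier (M v)" and xyz: "lideal (M v) x \<inter> lideal (M v) y = lideal (M v) z"
  shows "lideal C (gp_incl V E M v x) \<inter> lideal C (gp_incl V E M v y) = lideal C (gp_incl V E M v z)"
proof (intro equalityI subsetI)
  fix X
  assume "X \<in> lideal C (gp_incl V E M v x) \<inter> lideal C (gp_incl V E M v y)"
  then obtain Z t where "Z \<in> W" and "t \<in> lideal (M v) z" and "X = cl (Z @ [(v, t)])"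
    using gp_lideal_inter_tail[OF v x y] xyz by metis
  then show "X \<in> lideal C (gp_incl V E M v z)"
    using gp_class_mem_lideal[OF v z] by simp
next
  fix X
  assume "X \<in> lideal C (gp_incl V E M v z)"
  then obtain p where "p \<in> W" and "X = cl (p @ [(v, z)])"
    using lideal_gp_incl[OF v z] by blast
  moreover have "z \<in> lideal (M v) x \<inter> lideal (M v) y"
    using monoid.mem_lideal_self[OF monoid[OF v] z] xyz by simp
  ultimately show "X \<in> lideal C (gp_incl V E M v x) \<inter> lideal C (gp_incl V E M v y)"
    using gp_class_mem_lideal[OF v x] gp_class_mem_lideal[OF v y] by blast
qed

end

theorem lemma2p7:
  fixes V :: "'v set" and E :: "'v \<Rightarrow> 'v \<Rightarrow> bool" and M :: "'v \<Rightarrow> 'a monoid"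
  assumes "is_graph V E"
    and "\<And>v. v \<in> V \<Longrightarrow> left_LCM_monoid (M v)"
    and "v \<in> V" and "x \<in> carrier (M v)" and "y \<in> carrier (M v)"
  shows "((lideal (M v) x \<inter> lideal (M v) y = {}) \<longleftrightarrow>
           (lideal (graph_product V E M) (gp_incl V E M v x) \<inter>
            lideal (graph_product V E M) (gp_incl V E M v y) = {})) \<and>
         (\<forall>z\<in>carrier (M v). lideal (M v) x \<inter> lideal (M v) y = lideal (M v) z \<longrightarrow>
           lideal (graph_product V E M) (gp_incl V E M v x) \<inter>
           lideal (graph_product V E M) (gp_incl V E M v y) =
           lideal (graph_product V E M) (gp_incl V E M v z))"
proof -
  interpret graph_of_monoids V E M
    using assms(1,2) by (auto intro: graph_of_monoids.intro simp: left_LCM_monoid_def)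
  show ?thesis
    using gp_lideals_disjoint_iff[OF assms(3-5)] gp_lideals_inter_eq[OF assms(3-5)] by simp
qed

end
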